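(* Let $\kappa$ be an uncountable regular cardinal, let $\mathcal{I}$ be a $\kappa$-complete proper ideal on $\kappa$ containing every bounded subset of $\kappa$, and let $\nu\in\{2,\kappa\}$. Then the space ${}^{\kappa}\nu\times{}^{\kappa}\kappa$ with the product topology $\tau_{\mathcal{I}}\times\tau_{\mathcal{I}}$ is homeomorphic to $({}^{\kappa}\kappa,\tau_{\mathcal{I}})$.
   Context: For $\mu\in\{2,\kappa\}$, ${}^{\kappa}\mu$ is the set of functions $\kappa\to\mu$; for $f\colon D\to\mu$ with $D\in\mathcal{I}$, $\mathbf{N}_f=\{x\in{}^{\kappa}\mu: f\subseteq x\}$, and $\tau_{\mathcal{I}}$ on ${}^{\kappa}\mu$ is the topology generated by these sets. *)

theory Defs
  imports "HOL-Analysis.Analysis"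
begin

text \<open>The cardinal kappa is represented by a cardinal well-order r on a type 'k
  with Field r = UNIV (card_order r); elements of 'k are the ordinals below kappa.\<close>

definition bounded_in :: "'k rel \<Rightarrow> 'k set \<Rightarrow> bool" where
  "bounded_in r A \<longleftrightarrow> (\<exists>\<beta>. \<forall>\<alpha>\<in>A. (\<alpha>, \<beta>) \<in> r)"

definition kappa_complete_ideal :: "'k rel \<Rightarrow> 'k set set \<Rightarrow> bool" where
  "kappa_complete_ideal r I \<longleftrightarrow>
     {} \<in> I \<and>
     (\<forall>A B. A \<in> I \<and> B \<subseteq> A \<longrightarrow> B \<in> I) \<and>
     (\<forall>A B. A \<in> I \<and> B \<in> I \<longrightarrow> A \<union> B \<in> I) \<and>
     (\<forall>F. F \<subseteq> I \<and> (card_of F, r) \<in> ordLess \<longrightarrow> \<Union>F \<in> I)"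

definition proper_ideal :: "'k set set \<Rightarrow> bool" where
  "proper_ideal I \<longleftrightarrow> UNIV \<notin> I"

text \<open>N_f for f : D \<rightarrow> mu, D \<in> I (f given as a total function, only its values on D matter).\<close>
definition basic_nbhd :: "'k set \<Rightarrow> ('k \<Rightarrow> 'm) \<Rightarrow> ('k \<Rightarrow> 'm) set" where
  "basic_nbhd D f = {x. \<forall>\<alpha>\<in>D. x \<alpha> = f \<alpha>}"

definition tauI :: "'k set set \<Rightarrow> ('k \<Rightarrow> 'm) topology" where
  "tauI I = topology_generated_by {basic_nbhd D f | D f. D \<in> I}"

end

theory Submission
  imports Defs
begin

unbundle cardinal_syntax

text \<open>A bijection \<open>p : \<nu> \<times> \<kappa> \<rightarrow> \<kappa>\<close>, applied coordinatewise, carries \<open>\<^sup>\<kappa>\<nu> \<times> \<^sup>\<kappa>\<kappa>\<close> onto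
  \<open>\<^sup>\<kappa>\<kappa>\<close>. Such a coordinatewise map and its inverse are continuous because the values of
  the image on a set \<open>D \<in> \<I>\<close> of coordinates depend only on the values of the arguments on
  \<open>D\<close>.\<close>

lemma topspace_tauI: "{} \<in> I \<Longrightarrow> topspace (tauI I) = UNIV"
  unfolding tauI_def topology_generated_by_topspace
  by (auto simp: basic_nbhd_def)

lemma openin_tauI_basic_nbhd: "D \<in> I \<Longrightarrow> openin (tauI I) (basic_nbhd D f)"
  unfolding tauI_def by (rule topology_generated_by_Basis) blast

lemma continuous_map_tauI:
  assumes "{} \<in> I"
    and "\<And>D g. D \<in> I \<Longrightarrow> openin X (f -` basic_nbhd D g \<inter> topspace X)"
  shows "continuous_map X (tauI I) f"
  unfolding tauI_def
  by (rule continuous_on_generated_topo) (use assms in \<open>auto simp: basic_nbhd_def\<close>)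

lemma continuous_map_tauI_comp:
  fixes c :: "'a \<Rightarrow> 'b" and I :: "'k set set"
  assumes "{} \<in> I"
  shows "continuous_map (tauI I) (tauI I) ((\<circ>) c)"
proof (rule continuous_map_tauI[OF assms])
  fix D and g :: "'k \<Rightarrow> 'b"
  assume "D \<in> I"
  then have "\<forall>z \<in> (\<circ>) c -` basic_nbhd D g. openin (tauI I) (basic_nbhd D z)
      \<and> z \<in> basic_nbhd D z \<and> basic_nbhd D z \<subseteq> (\<circ>) c -` basic_nbhd D g"
    using openin_tauI_basic_nbhd by (auto simp: basic_nbhd_def)
  then show "openin (tauI I) ((\<circ>) c -` basic_nbhd D g \<inter> topspace (tauI I))"
    using assms by (subst openin_subopen) (auto simp: topspace_tauI)
qed

lemma tauI_homeomorphic_bij: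
  fixes p :: "'a \<Rightarrow> 'b" and I :: "'k set set"
  assumes "bij p" "{} \<in> I"
  shows "(tauI I :: ('k \<Rightarrow> 'a) topology) homeomorphic_space (tauI I :: ('k \<Rightarrow> 'b) topology)"
proof -
  have "inv p \<circ> (p \<circ> x) = x" "p \<circ> (inv p \<circ> y) = y"
    for x :: "'k \<Rightarrow> 'a" and y :: "'k \<Rightarrow> 'b"
    using assms(1) by (auto simp: comp_def bij_is_inj bij_is_surj surj_f_inv_f)
  then have "homeomorphic_maps (tauI I :: ('k \<Rightarrow> 'a) topology) (tauI I) ((\<circ>) p) ((\<circ>) (inv p))"
    using assms(2) by (simp add: homeomorphic_maps_def continuous_map_tauI_comp)
  then show ?thesis
    unfolding homeomorphic_space_def by blast
qed

lemma prod_tauI_homeomorphic_tauI_Times: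
  fixes I :: "'k set set"
  assumes "{} \<in> I"
  shows "prod_topology (tauI I :: ('k \<Rightarrow> 'a) topology) (tauI I :: ('k \<Rightarrow> 'b) topology)
           homeomorphic_space (tauI I :: ('k \<Rightarrow> 'a \<times> 'b) topology)"
proof -
  define zip :: "('k \<Rightarrow> 'a) \<times> ('k \<Rightarrow> 'b) \<Rightarrow> 'k \<Rightarrow> 'a \<times> 'b"
    where "zip = (\<lambda>(x, y) \<alpha>. (x \<alpha>, y \<alpha>))"
  define unzip :: "('k \<Rightarrow> 'a \<times> 'b) \<Rightarrow> ('k \<Rightarrow> 'a) \<times> ('k \<Rightarrow> 'b)"
    where "unzip = (\<lambda>z. (fst \<circ> z, snd \<circ> z))"
  have "continuous_map (prod_topology (tauI I) (tauI I)) (tauI I) zip"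
  proof (rule continuous_map_tauI[OF assms])
    fix D and g :: "'k \<Rightarrow> 'a \<times> 'b"
    assume D: "D \<in> I"
    have "zip -` basic_nbhd D g \<inter> topspace (prod_topology (tauI I) (tauI I))
        = basic_nbhd D (fst \<circ> g) \<times> basic_nbhd D (snd \<circ> g)"
      using assms by (auto simp: zip_def basic_nbhd_def topspace_tauI prod_eq_iff)
    then show "openin (prod_topology (tauI I) (tauI I))
        (zip -` basic_nbhd D g \<inter> topspace (prod_topology (tauI I) (tauI I)))"
      using D by (simp add: openin_prod_Times_iff openin_tauI_basic_nbhd)
  qed
  moreover have "continuous_map (tauI I) (prod_topology (tauI I) (tauI I)) unzip"
  proof -
    have "fst \<circ> unzip = (\<circ>) fst" "snd \<circ> unzip = (\<circ>) snd"
      by (auto simp: unzip_def)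
    then show ?thesis
      using assms by (simp add: continuous_map_pairwise continuous_map_tauI_comp)
  qed
  ultimately have "homeomorphic_maps (prod_topology (tauI I) (tauI I)) (tauI I) zip unzip"
    by (auto simp: homeomorphic_maps_def zip_def unzip_def)
  then show ?thesis
    unfolding homeomorphic_space_def by blast
qed

lemma bij_Times_infinite:
  assumes "infinite (UNIV :: 'k set)"
    and "|UNIV :: 'a set| \<le>o |UNIV :: 'k set|"
  shows "\<exists>p :: 'a \<times> 'k \<Rightarrow> 'k. bij p"
proof -
  have "( |(UNIV :: 'a set) \<times> (UNIV :: 'k set)|, |UNIV :: 'k set| ) \<in> ordIso"
    using assms card_of_Times_infinite by blast
  then show ?thesis
    by (metis card_of_ordIso UNIV_Times_UNIV)
qed

lemma prod_tauI_homeomorphic_tauI: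
  fixes I :: "'k set set"
  assumes "{} \<in> I" "infinite (UNIV :: 'k set)"
    and "|UNIV :: 'a set| \<le>o |UNIV :: 'k set|"
  shows "prod_topology (tauI I :: ('k \<Rightarrow> 'a) topology) (tauI I :: ('k \<Rightarrow> 'k) topology)
           homeomorphic_space (tauI I :: ('k \<Rightarrow> 'k) topology)"
proof -
  obtain p :: "'a \<times> 'k \<Rightarrow> 'k" where "bij p"
    using bij_Times_infinite assms(2,3) by blast
  then show ?thesis
    using prod_tauI_homeomorphic_tauI_Times tauI_homeomorphic_bij homeomorphic_space_trans assms(1)
    by blast
qed

theorem proposition2p6:
  fixes r :: "'k rel" and I :: "'k set set"
  assumes "card_order r"
    and "\<not> countable (UNIV :: 'k set)"
    and "regularCard r"
    and "kappa_complete_ideal r I"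
    and "proper_ideal I"
    and "\<forall>A. bounded_in r A \<longrightarrow> A \<in> I"
  shows "(prod_topology (tauI I :: ('k \<Rightarrow> bool) topology) (tauI I :: ('k \<Rightarrow> 'k) topology))
           homeomorphic_space (tauI I :: ('k \<Rightarrow> 'k) topology)
       \<and> (prod_topology (tauI I :: ('k \<Rightarrow> 'k) topology) (tauI I :: ('k \<Rightarrow> 'k) topology))
           homeomorphic_space (tauI I :: ('k \<Rightarrow> 'k) topology)"
proof -
  have empty: "{} \<in> I"
    using assms(4) unfolding kappa_complete_ideal_def by blast
  have infinite: "infinite (UNIV :: 'k set)"
    using assms(2) countable_finite by blast
  have "|UNIV :: bool set| \<le>o |UNIV :: 'k set|"
    using infinite by (meson card_of_Well_order card_of_ordLeq_finite finite ordLeq_total)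
  then show ?thesis
    using prod_tauI_homeomorphic_tauI[OF empty infinite]
      prod_tauI_homeomorphic_tauI[OF empty infinite ordLeq_refl[OF card_of_Card_order]]
    by blast
qed

end
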